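(* Let $A,B\subset\mathbb D$ be bounded domains and assume there is $R>0$ such that $A\cap B_R(1)=B\cap B_R(1)=\mathbb D\cap B_R(1)$, where $B_R(z_0):=\{z\in\mathbb C:|z-z_0|<R\}$. Let $T\colon A\to B$ be a conformal map of $A$ onto $B$ with $T(1)=1$ (in the sense of its boundary extension). Then $c:=T'(1)>0$, and for every $\delta>0$ there exists $\varepsilon>0$ such that $$|z|^{c+\delta}\le|T(z)|\le|z|^{c-\delta}\qquad\text{for all }z\in A\cap B_\varepsilon(1).$$
   Context: $\mathbb D$ is the open unit disk; $T'(1)$ refers to the derivative of the analytic extension of $T$ to a neighborhood of $1$ obtained by Schwarz reflection across the unit circle. *)

theory Defs
  imports "HOL-Analysis.Analysis"
begin

end

theory Submission
  imports Defs "HOL-Complex_Analysis.Complex_Analysis"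
begin

text \<open>In the coordinate \<open>w\<close> with \<open>z = exp (\<i> w)\<close>, a neighbourhood of \<open>1\<close> in the disc becomes a
  neighbourhood of \<open>0\<close> in the upper half plane, and \<open>T\<close> becomes \<open>\<Phi> = -\<i> Ln \<circ> T \<circ> exp (\<i> \<cdot>)\<close>, which maps
  the upper half plane into itself; its imaginary part \<open>-ln \<bar>T\<bar>\<close> tends to \<open>0\<close> at the real axis, since
  \<open>T\<close> maps points near the circle to points near the circle. A Schwarz reflection, carried out with
  Cauchy integrals because \<open>\<Phi>\<close> is only known to be bounded with \<open>Im \<Phi> \<rightarrow> 0\<close>, extends \<open>\<Phi>\<close>
  holomorphically across \<open>0\<close>. The extension is real on the real axis and preserves the upper half
  plane, so \<open>\<Phi>'(0) = T'(1)\<close> is real and positive and \<open>Im \<Phi>(w) = (\<Phi>'(0) + o(1)) Im w\<close>. As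
  \<open>Im w = -ln \<bar>z\<bar>\<close> and \<open>Im \<Phi>(w) = -ln \<bar>T z\<bar>\<close>, this is the power estimate.\<close>

definition cauchy_segment :: "complex \<Rightarrow> complex \<Rightarrow> (complex \<Rightarrow> complex) \<Rightarrow> complex \<Rightarrow> complex" where
  "cauchy_segment p q f w = contour_integral (linepath p q) (\<lambda>u. f u / (u - w))"

lemma holomorphic_on_cauchy_segment:
  assumes f: "continuous_on (closed_segment p q) f" and S: "open S" "S \<inter> closed_segment p q = {}"
  shows "cauchy_segment p q f holomorphic_on S"
  unfolding holomorphic_on_def
proof
  fix w assume "w \<in> S"
  then have w: "w \<in> S - path_image (linepath p q)" using S by auto
  have int: "((\<lambda>u. f u / (u - z)^1) has_contour_integral cauchy_segment p q f z) (linepath p q)"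
    if "z \<in> S - path_image (linepath p q)" for z
  proof -
    have "continuous_on (closed_segment p q) (\<lambda>u. f u / (u - z))"
      using that by (intro continuous_intros f) auto
    then show ?thesis
      by (simp add: cauchy_segment_def has_contour_integral_integral contour_integrable_continuous_linepath)
  qed
  have "\<exists>D. (cauchy_segment p q f has_field_derivative D) (at w)"
    by (rule exI, rule Cauchy_next_derivative(2)[where f'=f and k=1 and B="norm (q-p)" and S=S, OF _ _ int])
       (use f S w in auto)
  then show "cauchy_segment p q f field_differentiable at w within S"
    using field_differentiable_at_within field_differentiable_def by blast
qed

lemma norm_cauchy_segment_le:
  assumes f: "continuous_on (closed_segment p q) f"
    and bnd: "\<And>u. u \<in> closed_segment p q \<Longrightarrow> norm (f u) \<le> M \<and> \<delta> \<le> norm (u - w)" and "0 < \<delta>"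
  shows "norm (cauchy_segment p q f w) \<le> M / \<delta> * norm (q - p)"
  unfolding cauchy_segment_def
proof (rule contour_integral_bound_linepath)
  have ne: "u - w \<noteq> 0" if "u \<in> closed_segment p q" for u using bnd[OF that] \<open>0 < \<delta>\<close> by auto
  show "(\<lambda>u. f u / (u - w)) contour_integrable_on linepath p q"
    using ne by (intro contour_integrable_continuous_linepath continuous_intros f) auto
  have M: "0 \<le> M" using bnd[of p] norm_ge_zero[of "f p"] by (meson ends_in_segment(1) order_trans)
  then show "0 \<le> M / \<delta>" using \<open>0 < \<delta>\<close> by simp
  show "norm (f u / (u - w)) \<le> M / \<delta>" if "u \<in> closed_segment p q" for u
    using bnd[OF that] \<open>0 < \<delta>\<close> M ne[OF that]
    by (simp add: norm_divide divide_simps) (metis mult.commute mult_mono norm_ge_zero)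
qed

lemma closed_segment_vertical_subset_box:
  assumes "\<bar>x\<bar> < a" "y1 \<in> {c<..<d}" "y2 \<in> {c<..<d}"
  shows "closed_segment (Complex x y1) (Complex x y2) \<subseteq> box (Complex (-a) c) (Complex a d)"
  using assms by (auto simp: closed_segment_same_Re in_box_complex_iff closed_segment_eq_real_ivl)

lemma cauchy_segment_vertical_split:
  assumes f: "continuous_on (closed_segment (Complex x y1) (Complex x y3)) f"
    and y2: "y2 \<in> closed_segment y1 y3" and w: "Re w \<noteq> x"
  shows "cauchy_segment (Complex x y1) (Complex x y3) f w
       = cauchy_segment (Complex x y1) (Complex x y2) f w + cauchy_segment (Complex x y2) (Complex x y3) f w"
  unfolding cauchy_segment_def
proof (rule contour_integral_split_linepath)
  show "continuous_on (closed_segment (Complex x y1) (Complex x y3)) (\<lambda>u. f u / (u - w))"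
    using w by (intro continuous_intros f) (auto simp: closed_segment_same_Re)
  show "Complex x y2 \<in> closed_segment (Complex x y1) (Complex x y3)"
    using y2 by (simp add: closed_segment_same_Re)
qed

lemma norm_cauchy_segment_vertical_le:
  assumes f: "continuous_on (closed_segment (Complex x y1) (Complex x y2)) f"
    and bnd: "\<And>u. u \<in> closed_segment (Complex x y1) (Complex x y2) \<Longrightarrow> norm (f u) \<le> M"
    and "0 < \<delta>" "\<delta> \<le> \<bar>Re w - x\<bar>"
  shows "norm (cauchy_segment (Complex x y1) (Complex x y2) f w) \<le> M / \<delta> * \<bar>y2 - y1\<bar>"
proof -
  have "Complex x y2 - Complex x y1 = Complex 0 (y2 - y1)" by (simp add: complex_eq_iff)
  then have "norm (Complex x y2 - Complex x y1) = \<bar>y2 - y1\<bar>" by (simp add: complex_norm)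
  moreover have "\<delta> \<le> norm (u - w)" if "u \<in> closed_segment (Complex x y1) (Complex x y2)" for u
    using that assms(4) abs_Re_le_cmod[of "u - w"] by (auto simp: closed_segment_same_Re)
  ultimately show ?thesis
    using norm_cauchy_segment_le[OF f _ \<open>0 < \<delta>\<close>, of M w] bnd by simp
qed

lemma contour_integral_rectpath_split:
  assumes "continuous_on (path_image (rectpath p q)) f"
  shows "contour_integral (rectpath p q) f =
     contour_integral (linepath p (Complex (Re q) (Im p))) f
   + contour_integral (linepath (Complex (Re q) (Im p)) q) f
   + contour_integral (linepath q (Complex (Re p) (Im q))) f
   + contour_integral (linepath (Complex (Re p) (Im q)) p) f"
proof -
  define p' q' where "p' = Complex (Re q) (Im p)" and "q' = Complex (Re p) (Im q)"
  have "path_image (rectpath p q)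
      = closed_segment p p' \<union> closed_segment p' q \<union> closed_segment q q' \<union> closed_segment q' p"
    by (simp add: rectpath_def Let_def path_image_join p'_def q'_def Un_assoc)
  then have "f contour_integrable_on linepath p p'" "f contour_integrable_on linepath p' q"
    "f contour_integrable_on linepath q q'" "f contour_integrable_on linepath q' p"
    using assms by (auto intro!: contour_integrable_continuous_linepath elim: continuous_on_subset)
  then show ?thesis
    by (simp add: rectpath_def Let_def p'_def [symmetric] q'_def [symmetric] contour_integrable_joinI
        valid_path_join add.assoc)
qed

lemma cauchy_segment_rectangle_formula:
  assumes holF: "F holomorphic_on S" and "open S" "convex S" and "cbox p q \<subseteq> S" and w: "w \<in> box p q"
  shows "cauchy_segment p (Complex (Re q) (Im p)) F w + cauchy_segment (Complex (Re q) (Im p)) q F w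
       + cauchy_segment q (Complex (Re p) (Im q)) F w + cauchy_segment (Complex (Re p) (Im q)) p F w
       = 2*pi*\<i> * F w"
proof -
  have "Re p \<le> Re q" "Im p \<le> Im q" using w by (auto simp: in_box_complex_iff)
  then have \<gamma>: "path_image (rectpath p q) \<subseteq> S - {w}"
    using path_image_rectpath_cbox_minus_box[of p q] assms by auto
  have "w \<in> interior S" using assms box_subset_cbox interior_open by blast
  then have "((\<lambda>u. F u/(u-w)) has_contour_integral (2*pi*\<i> * winding_number (rectpath p q) w * F w))
      (rectpath p q)"
    using \<gamma> assms by (intro Cauchy_integral_formula_convex_simple) auto
  then have "contour_integral (rectpath p q) (\<lambda>u. F u/(u-w)) = 2*pi*\<i> * F w"
    using winding_number_rectpath[OF w] by (simp add: contour_integral_unique)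
  moreover have "continuous_on (path_image (rectpath p q)) (\<lambda>u. F u/(u-w))"
    using \<gamma> holomorphic_on_imp_continuous_on[OF holF]
    by (intro continuous_intros) (auto elim: continuous_on_subset)
  ultimately show ?thesis
    using contour_integral_rectpath_split[of p q "\<lambda>u. F u/(u-w)"] by (simp add: cauchy_segment_def)
qed

lemma cauchy_segment_rectangle_theorem:
  assumes holF: "F holomorphic_on S" and "convex S" and "cbox p q \<subseteq> S" and "w \<notin> S"
    and "Re p \<le> Re q" "Im p \<le> Im q"
  shows "cauchy_segment p (Complex (Re q) (Im p)) F w + cauchy_segment (Complex (Re q) (Im p)) q F w
       + cauchy_segment q (Complex (Re p) (Im q)) F w + cauchy_segment (Complex (Re p) (Im q)) p F w = 0"
proof -
  have \<gamma>: "path_image (rectpath p q) \<subseteq> S"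
    using path_image_rectpath_subset_cbox[of p q] assms by auto
  have "(\<lambda>u. F u/(u-w)) holomorphic_on S"
    using \<open>w \<notin> S\<close> by (intro holomorphic_intros holF) auto
  then have "((\<lambda>u. F u/(u-w)) has_contour_integral 0) (rectpath p q)"
    using \<gamma> \<open>convex S\<close> by (intro Cauchy_theorem_convex_simple) auto
  moreover have "continuous_on (path_image (rectpath p q)) (\<lambda>u. F u/(u-w))"
    using \<gamma> \<open>w \<notin> S\<close> holomorphic_on_imp_continuous_on[OF holF]
    by (intro continuous_intros) (auto elim: continuous_on_subset)
  ultimately show ?thesis
    using contour_integral_rectpath_split[of p q "\<lambda>u. F u/(u-w)"]
    by (simp add: cauchy_segment_def contour_integral_unique)
qed

section \<open>Schwarz reflection without continuity up to the axis\<close>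

lemma norm_cauchy_kernel_reflection_le:
  fixes z u w :: complex
  assumes "Im u = t" "0 < t" "2*t \<le> Im w" "norm z \<le> M" "\<bar>Im z\<bar> \<le> \<epsilon>"
  shows "norm (z/(u-w) - cnj z/(cnj u - w)) \<le> 8*M*t/(Im w)^2 + 4*\<epsilon>/Im w"
proof -
  define d where "d = Im w"
  have d: "d > 0" using assms d_def by auto
  have n1: "norm (u - w) \<ge> d/2"
    using abs_Im_le_cmod[of "u-w"] assms by (simp add: d_def)
  have n2: "norm (cnj u - w) \<ge> d/2"
    using abs_Im_le_cmod[of "cnj u-w"] assms by (simp add: d_def)
  have nz1: "u - w \<noteq> 0" and nz2: "cnj u - w \<noteq> 0" using n1 n2 d by auto
  have M: "0 \<le> M" using assms(4) norm_ge_zero[of z] by linarith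
  have eps: "0 \<le> \<epsilon>" using assms(5) by linarith
  \<comment> \<open>split \<open>z\<close> into real and imaginary part: the real part contributes \<open>O(t)\<close>, the imaginary part \<open>O(\<epsilon>)\<close>\<close>
  have eq: "z/(u-w) - cnj z/(cnj u - w) = of_real (Re z) * ((cnj u - u) / ((u-w)*(cnj u - w)))
            + \<i> * of_real (Im z) * (1/(u-w) + 1/(cnj u - w))"
  proof -
    have gen: "(of_real x + \<i> * of_real y)/A - (of_real x - \<i> * of_real y)/B
        = of_real x * ((B - A)/(A*B)) + \<i> * of_real y * (1/A + 1/B)" if "A \<noteq> 0" "B \<noteq> 0" for x y A B
      using that by (simp add: field_simps)
    have "z = of_real (Re z) + \<i> * of_real (Im z)" "cnj z = of_real (Re z) - \<i> * of_real (Im z)"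
      by (simp_all add: complex_eq_iff)
    moreover note gen[OF nz1 nz2, of "Re z" "Im z"]
    ultimately show ?thesis by simp
  qed
  have cu: "norm (cnj u - u) = 2*t"
  proof -
    have "cnj u - u = - (2 * \<i> * of_real t)" using assms(1) by (simp add: complex_eq_iff)
    then show ?thesis using assms(2) by (simp add: norm_mult)
  qed
  have re_part: "norm (of_real (Re z) * ((cnj u - u) / ((u-w)*(cnj u - w)))) \<le> M * (2*t) / ((d/2)*(d/2))"
  proof -
    have "norm (of_real (Re z) * ((cnj u - u) / ((u-w)*(cnj u - w))))
        = \<bar>Re z\<bar> * (2*t) / (norm (u-w) * norm (cnj u - w))"
      by (simp add: norm_mult norm_divide cu)
    also have "\<dots> \<le> M * (2*t) / (norm (u-w) * norm (cnj u - w))"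
      using abs_Re_le_cmod[of z] assms(2,4) nz1 nz2
      by (intro divide_right_mono mult_right_mono) auto
    also have "\<dots> \<le> M * (2*t) / ((d/2)*(d/2))"
      using n1 n2 d M assms(2) by (intro divide_left_mono mult_mono mult_pos_pos) auto
    finally show ?thesis .
  qed
  have im_part: "norm (\<i> * of_real (Im z) * (1/(u-w) + 1/(cnj u - w))) \<le> \<epsilon> * (2/d + 2/d)"
  proof -
    have "norm (1/(u-w)) \<le> 2/d" "norm (1/(cnj u-w)) \<le> 2/d"
      using n1 n2 d by (simp_all add: norm_divide divide_simps)
    then have "norm (1/(u-w) + 1/(cnj u - w)) \<le> 2/d + 2/d"
      by (meson add_mono norm_triangle_le)
    then show ?thesis
      using assms(5) eps by (simp only: norm_mult norm_ii norm_of_real mult_1) (intro mult_mono; simp)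
  qed
  have "norm (z/(u-w) - cnj z/(cnj u - w)) \<le> M * (2*t) / ((d/2)*(d/2)) + \<epsilon> * (2/d + 2/d)"
    unfolding eq using norm_triangle_le[OF add_mono[OF re_part im_part]] by simp
  also have "\<dots> = 8*M*t/(Im w)^2 + 4*\<epsilon>/Im w"
    using d by (simp add: d_def field_simps power2_eq_square)
  finally show ?thesis .
qed

lemma cauchy_segment_reflected_pair:
  fixes F :: "complex \<Rightarrow> complex"
  assumes contF: "continuous_on (closed_segment (Complex (-c) t) (Complex c t)) F"
    and t: "0 < t" "t < Im w"
  shows "cauchy_segment (Complex (-c) t) (Complex c t) F w
           + cauchy_segment (Complex c (-t)) (Complex (-c) (-t)) (\<lambda>u. cnj (F (cnj u))) w
         = contour_integral (linepath (Complex (-c) t) (Complex c t)) (\<lambda>u. F u/(u-w) - cnj (F u)/(cnj u-w))"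
proof -
  define L where "L = linepath (Complex (-c) t) (Complex c t)"
  define L' where "L' = linepath (Complex (-c) (-t)) (Complex c (-t))"
  have cnj_seg: "cnj ` closed_segment (Complex (-c) (-t)) (Complex c (-t))
      \<subseteq> closed_segment (Complex (-c) t) (Complex c t)"
    by (auto simp: closed_segment_same_Im)
  have cont1: "continuous_on (closed_segment (Complex (-c) t) (Complex c t)) (\<lambda>u. F u/(u-w))"
    and cont2: "continuous_on (closed_segment (Complex (-c) t) (Complex c t)) (\<lambda>u. cnj (F u)/(cnj u-w))"
    using t by (intro continuous_intros contF; force simp: closed_segment_same_Im complex_eq_iff)+
  have "continuous_on (closed_segment (Complex (-c) (-t)) (Complex c (-t))) (\<lambda>u. F (cnj u))"
    by (rule continuous_on_compose2[OF contF continuous_on_cnj[OF continuous_on_id] cnj_seg])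
  then have cont3:
      "continuous_on (closed_segment (Complex (-c) (-t)) (Complex c (-t))) (\<lambda>u. cnj (F (cnj u))/(u-w))"
    using t by (intro continuous_intros) (auto simp: closed_segment_same_Im)
  have "contour_integral (linepath (Complex c (-t)) (Complex (-c) (-t))) (\<lambda>u. cnj (F (cnj u))/(u-w))
      = - contour_integral L' (\<lambda>u. cnj (F (cnj u))/(u-w))"
    using contour_integral_reverse_linepath[OF cont3] by (simp add: L'_def)
  also have "contour_integral L' (\<lambda>u. cnj (F (cnj u))/(u-w)) = contour_integral L (\<lambda>u. cnj (F u)/(cnj u-w))"
  proof -
    have "L' x = cnj (L x)" for x
      by (simp add: L_def L'_def linepath_def complex_eq_iff)
    moreover have "Complex c (- t) - Complex (- c) (- t) = Complex c t - Complex (- c) t"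
      by (simp add: complex_eq_iff)
    ultimately show ?thesis
      by (simp add: contour_integral_integral L_def L'_def)
  qed
  finally show ?thesis
    using cont1 cont2
    by (simp add: cauchy_segment_def L_def contour_integral_diff contour_integrable_continuous_linepath)
qed

lemma norm_cauchy_segment_reflected_pair_le:
  fixes F :: "complex \<Rightarrow> complex"
  assumes c: "0 < c" and t: "0 < t" "2*t \<le> Im w"
    and contF: "continuous_on (closed_segment (Complex (-c) t) (Complex c t)) F"
    and bnd: "\<And>u. u \<in> closed_segment (Complex (-c) t) (Complex c t) \<Longrightarrow> norm (F u) \<le> M \<and> \<bar>Im (F u)\<bar> \<le> \<epsilon>"
  shows "norm (cauchy_segment (Complex (-c) t) (Complex c t) F w
           + cauchy_segment (Complex c (-t)) (Complex (-c) (-t)) (\<lambda>u. cnj (F (cnj u))) w)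
         \<le> (8*M*t/(Im w)^2 + 4*\<epsilon>/Im w) * (2*c)"
proof -
  have ne: "u - w \<noteq> 0" "cnj u - w \<noteq> 0" if "Im u = t" for u
    using that t by (auto simp: complex_eq_iff)
  have "norm (contour_integral (linepath (Complex (-c) t) (Complex c t))
          (\<lambda>u. F u/(u-w) - cnj (F u)/(cnj u-w)))
         \<le> (8*M*t/(Im w)^2 + 4*\<epsilon>/Im w) * norm (Complex c t - Complex (-c) t)"
  proof (rule contour_integral_bound_linepath)
    show "(\<lambda>u. F u / (u - w) - cnj (F u) / (cnj u - w))
        contour_integrable_on linepath (Complex (- c) t) (Complex c t)"
      using ne by (intro contour_integrable_continuous_linepath continuous_intros contF)
        (auto simp: closed_segment_same_Im)
    have "0 \<le> M" "0 \<le> \<epsilon>"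
      using bnd[of "Complex c t"] by (auto intro: order_trans[OF norm_ge_zero] order_trans[OF abs_ge_zero])
    then show "0 \<le> 8 * M * t / (Im w)\<^sup>2 + 4 * \<epsilon> / Im w"
      using t by (intro add_nonneg_nonneg divide_nonneg_pos) auto
    show "norm (F u / (u - w) - cnj (F u) / (cnj u - w)) \<le> 8 * M * t / (Im w)\<^sup>2 + 4 * \<epsilon> / Im w"
      if "u \<in> closed_segment (Complex (- c) t) (Complex c t)" for u
      using norm_cauchy_kernel_reflection_le[of u t w "F u" M \<epsilon>] bnd[OF that] that t
      by (auto simp: closed_segment_same_Im)
  qed
  moreover have "Complex c t - Complex (-c) t = of_real (2*c)" by (simp add: complex_eq_iff)
  ultimately show ?thesis
    using cauchy_segment_reflected_pair[OF contF, of w] t c by simp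
qed

text \<open>The Cauchy integrals of \<open>F\<close> over the boundary of \<open>[-a,a] \<times> [t,b]\<close> and of its reflection over the
  boundary of \<open>[-a,a] \<times> [-b,-t]\<close>, with the two horizontal sides at heights \<open>\<plusminus>t\<close> left out. Those two
  sides nearly cancel when \<open>Im F\<close> is small, which is what makes the limit \<open>t \<rightarrow> 0\<close> work.\<close>
definition reflection_integral :: "(complex \<Rightarrow> complex) \<Rightarrow> real \<Rightarrow> real \<Rightarrow> real \<Rightarrow> complex \<Rightarrow> complex" where
  "reflection_integral F a b t w =
     (cauchy_segment (Complex a t) (Complex a b) F w
      + cauchy_segment (Complex a b) (Complex (-a) b) F w
      + cauchy_segment (Complex (-a) b) (Complex (-a) t) F w
      + cauchy_segment (Complex (-a) (-b)) (Complex a (-b)) (\<lambda>u. cnj (F (cnj u))) w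
      + cauchy_segment (Complex a (-b)) (Complex a (-t)) (\<lambda>u. cnj (F (cnj u))) w
      + cauchy_segment (Complex (-a) (-t)) (Complex (-a) (-b)) (\<lambda>u. cnj (F (cnj u))) w) / (2*pi*\<i>)"

lemma reflection_integral_mult_2pi_i:
  "2*pi*\<i> * reflection_integral F a b t w =
     cauchy_segment (Complex a t) (Complex a b) F w
     + cauchy_segment (Complex a b) (Complex (-a) b) F w
     + cauchy_segment (Complex (-a) b) (Complex (-a) t) F w
     + cauchy_segment (Complex (-a) (-b)) (Complex a (-b)) (\<lambda>u. cnj (F (cnj u))) w
     + cauchy_segment (Complex a (-b)) (Complex a (-t)) (\<lambda>u. cnj (F (cnj u))) w
     + cauchy_segment (Complex (-a) (-t)) (Complex (-a) (-b)) (\<lambda>u. cnj (F (cnj u))) w"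
  unfolding reflection_integral_def by simp

lemma holomorphic_on_reflected_box:
  assumes "F holomorphic_on box (Complex (-a) 0) (Complex a b)"
  shows "(\<lambda>u. cnj (F (cnj u))) holomorphic_on box (Complex (-a) (-b)) (Complex a 0)"
proof -
  have "cnj ` box (Complex (-a) (-b)) (Complex a 0) = box (Complex (-a) 0) (Complex a b)"
    by (auto simp: image_cnj_conv_vimage_cnj in_box_complex_iff)
  then have "cnj \<circ> F \<circ> cnj holomorphic_on box (Complex (-a) (-b)) (Complex a 0)"
    using assms by (intro holomorphic_on_compose_cnj_cnj) auto
  then show ?thesis by (simp add: o_def)
qed

context
  fixes F :: "complex \<Rightarrow> complex" and a b a1 b1 :: real
  assumes holF: "F holomorphic_on box (Complex (-a) 0) (Complex a b)"
    and a1: "0 < a1" "a1 < a" and b1: "0 < b1" "b1 < b"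
begin

lemma holomorphic_reflection_integral:
  assumes t: "0 < t" "t \<le> b1"
  shows "reflection_integral F a1 b1 t holomorphic_on ball 0 (min a1 b1)"
proof -
  note contF = holomorphic_on_imp_continuous_on[OF holF]
    and contG = holomorphic_on_imp_continuous_on[OF holomorphic_on_reflected_box[OF holF]]
  have far: "ball 0 (min a1 b1) \<inter> closed_segment p q = {}"
    if "\<And>u. u \<in> closed_segment p q \<Longrightarrow> \<bar>Re u\<bar> = a1 \<or> \<bar>Im u\<bar> = b1" for p q
  proof (intro equals0I)
    fix u assume "u \<in> ball 0 (min a1 b1) \<inter> closed_segment p q"
    then show False using that[of u] abs_Re_le_cmod[of u] abs_Im_le_cmod[of u] by auto
  qed
  have F: "cauchy_segment p q F holomorphic_on ball 0 (min a1 b1)"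
    if "closed_segment p q \<subseteq> box (Complex (-a) 0) (Complex a b)"
       "\<And>u. u \<in> closed_segment p q \<Longrightarrow> \<bar>Re u\<bar> = a1 \<or> \<bar>Im u\<bar> = b1" for p q
    using that by (intro holomorphic_on_cauchy_segment far continuous_on_subset[OF contF]) auto
  have G: "cauchy_segment p q (\<lambda>u. cnj (F (cnj u))) holomorphic_on ball 0 (min a1 b1)"
    if "closed_segment p q \<subseteq> box (Complex (-a) (-b)) (Complex a 0)"
       "\<And>u. u \<in> closed_segment p q \<Longrightarrow> \<bar>Re u\<bar> = a1 \<or> \<bar>Im u\<bar> = b1" for p q
    using that by (intro holomorphic_on_cauchy_segment far continuous_on_subset[OF contG]) auto
  show ?thesis
    unfolding reflection_integral_def using t a1 b1
    by (intro holomorphic_intros F G)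
       (auto simp: closed_segment_same_Re closed_segment_same_Im in_box_complex_iff
          closed_segment_eq_real_ivl)
qed

lemma reflection_integral_cauchy:
  assumes t: "0 < t" "t < Im w" "Im w < b1" and w: "\<bar>Re w\<bar> < a1"
  shows "2*pi*\<i> * (F w - reflection_integral F a1 b1 t w)
       = cauchy_segment (Complex (-a1) t) (Complex a1 t) F w
         + cauchy_segment (Complex a1 (-t)) (Complex (-a1) (-t)) (\<lambda>u. cnj (F (cnj u))) w"
proof -
  have upper: "cauchy_segment (Complex (-a1) t) (Complex a1 t) F w
       + cauchy_segment (Complex a1 t) (Complex a1 b1) F w
       + cauchy_segment (Complex a1 b1) (Complex (-a1) b1) F w
       + cauchy_segment (Complex (-a1) b1) (Complex (-a1) t) F w
       = 2*pi*\<i> * F w"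
  proof -
    have sub: "cbox (Complex (-a1) t) (Complex a1 b1) \<subseteq> box (Complex (-a) 0) (Complex a b)"
      using t a1 b1 by (auto simp: in_cbox_complex_iff in_box_complex_iff)
    have "w \<in> box (Complex (-a1) t) (Complex a1 b1)"
      using t w by (auto simp: in_box_complex_iff)
    then show ?thesis
      using cauchy_segment_rectangle_formula[OF holF open_box convex_box(2) sub] by simp
  qed
  have lower: "cauchy_segment (Complex (-a1) (-b1)) (Complex a1 (-b1)) (\<lambda>u. cnj (F (cnj u))) w
       + cauchy_segment (Complex a1 (-b1)) (Complex a1 (-t)) (\<lambda>u. cnj (F (cnj u))) w
       + cauchy_segment (Complex a1 (-t)) (Complex (-a1) (-t)) (\<lambda>u. cnj (F (cnj u))) w
       + cauchy_segment (Complex (-a1) (-t)) (Complex (-a1) (-b1)) (\<lambda>u. cnj (F (cnj u))) w = 0"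
  proof -
    have sub: "cbox (Complex (-a1) (-b1)) (Complex a1 (-t)) \<subseteq> box (Complex (-a) (-b)) (Complex a 0)"
      using t a1 b1 by (auto simp: in_cbox_complex_iff in_box_complex_iff)
    have "w \<notin> box (Complex (-a) (-b)) (Complex a 0)"
      using t by (auto simp: in_box_complex_iff)
    then show ?thesis
      using cauchy_segment_rectangle_theorem[OF holomorphic_on_reflected_box[OF holF] convex_box(2) sub]
        t a1 b1
      by simp
  qed
  have rearrange: "X - (x2 + x3 + x4 + y1 + y2 + y4) = x1 + y3"
    if "x1 + x2 + x3 + x4 = X" "y1 + y2 + y3 + y4 = 0" for X x1 x2 x3 x4 y1 y2 y3 y4 :: complex
    using that by (simp add: algebra_simps eq_neg_iff_add_eq_0 flip: that(1))
  show ?thesis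
    unfolding right_diff_distrib reflection_integral_mult_2pi_i by (rule rearrange[OF upper lower])
qed

lemma reflection_integral_diff:
  assumes st: "0 < s" "s \<le> t" "t \<le> b1" and w: "\<bar>Re w\<bar> < a1"
  shows "2*pi*\<i> * (reflection_integral F a1 b1 s w - reflection_integral F a1 b1 t w)
      = cauchy_segment (Complex a1 s) (Complex a1 t) F w
        + cauchy_segment (Complex (-a1) t) (Complex (-a1) s) F w
        + cauchy_segment (Complex a1 (-t)) (Complex a1 (-s)) (\<lambda>u. cnj (F (cnj u))) w
        + cauchy_segment (Complex (-a1) (-s)) (Complex (-a1) (-t)) (\<lambda>u. cnj (F (cnj u))) w"
proof -
  define g where "g = (\<lambda>u. cnj (F (cnj u)))"
  note contF = holomorphic_on_imp_continuous_on[OF holF]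
    and contG = holomorphic_on_imp_continuous_on[OF holomorphic_on_reflected_box[OF holF], folded g_def]
  have far: "Re w \<noteq> x" if "\<bar>x\<bar> = a1" for x using w that by auto
  have split_F: "cauchy_segment (Complex x y1) (Complex x y3) F w
      = cauchy_segment (Complex x y1) (Complex x y2) F w + cauchy_segment (Complex x y2) (Complex x y3) F w"
    if "\<bar>x\<bar> = a1" "y1 \<in> {0<..b1}" "y3 \<in> {0<..b1}" "y2 \<in> closed_segment y1 y3" for x y1 y2 y3
    using that a1 b1
    by (intro cauchy_segment_vertical_split far
        continuous_on_subset[OF contF closed_segment_vertical_subset_box]) auto
  have split_g: "cauchy_segment (Complex x y1) (Complex x y3) g w
      = cauchy_segment (Complex x y1) (Complex x y2) g w + cauchy_segment (Complex x y2) (Complex x y3) g w"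
    if "\<bar>x\<bar> = a1" "y1 \<in> {-b1..<0}" "y3 \<in> {-b1..<0}" "y2 \<in> closed_segment y1 y3" for x y1 y2 y3
    using that a1 b1
    by (intro cauchy_segment_vertical_split far
        continuous_on_subset[OF contG closed_segment_vertical_subset_box]) auto
  show ?thesis
    unfolding right_diff_distrib reflection_integral_mult_2pi_i g_def[symmetric]
    using st a1 b1
    by (simp add: split_F[of a1 s b1 t] split_F[of "-a1" b1 s t] split_g[of a1 "-b1" "-s" "-t"]
        split_g[of "-a1" "-s" "-b1" "-t"] closed_segment_eq_real_ivl algebra_simps)
qed

lemma norm_reflection_integral_diff_le:
  assumes bnd: "\<And>u. u \<in> box (Complex (-a) 0) (Complex a b) \<Longrightarrow> norm (F u) \<le> M"
    and st: "0 < s" "s \<le> t" "t \<le> b1" and w: "norm w \<le> a1/2"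
  shows "norm (reflection_integral F a1 b1 s w - reflection_integral F a1 b1 t w) \<le> 8*M/a1 * (t - s)"
proof -
  note contF = holomorphic_on_imp_continuous_on[OF holF]
    and contG = holomorphic_on_imp_continuous_on[OF holomorphic_on_reflected_box[OF holF]]
  have Re_w: "\<bar>Re w\<bar> \<le> a1/2" using abs_Re_le_cmod[of w] w by linarith
  have far: "a1/2 \<le> \<bar>Re w - x\<bar>" if "\<bar>x\<bar> = a1" for x
    using Re_w a1 that by (auto simp: abs_if split: if_splits)
  have bound_F: "norm (cauchy_segment (Complex x y1) (Complex x y2) F w) \<le> M/(a1/2) * (t - s)"
    if "\<bar>x\<bar> = a1" "y1 \<in> {0<..b1}" "y2 \<in> {0<..b1}" "\<bar>y2 - y1\<bar> = t - s" for x y1 y2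
    using that a1 b1 bnd closed_segment_vertical_subset_box[of x a y1 0 b y2]
    by (subst that(4)[symmetric], intro norm_cauchy_segment_vertical_le far continuous_on_subset[OF contF])
      auto
  have bound_g:
      "norm (cauchy_segment (Complex x y1) (Complex x y2) (\<lambda>u. cnj (F (cnj u))) w) \<le> M/(a1/2) * (t - s)"
    if "\<bar>x\<bar> = a1" "y1 \<in> {-b1..<0}" "y2 \<in> {-b1..<0}" "\<bar>y2 - y1\<bar> = t - s" for x y1 y2
    using that a1 b1 bnd[of "cnj _"] closed_segment_vertical_subset_box[of x a y1 "-b" 0 y2]
    by (subst that(4)[symmetric], intro norm_cauchy_segment_vertical_le far continuous_on_subset[OF contG])
       (auto simp: in_box_complex_iff)
  have sum4: "norm (x1 + x2 + x3 + x4) \<le> 4 * B"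
    if "norm x1 \<le> B" "norm x2 \<le> B" "norm x3 \<le> B" "norm x4 \<le> B" for x1 x2 x3 x4 :: complex and B
    using that norm_triangle_ineq[of "x1 + x2 + x3" x4] norm_triangle_ineq[of "x1 + x2" x3]
      norm_triangle_ineq[of x1 x2] by linarith
  have "\<bar>Re w\<bar> < a1" using Re_w a1 by linarith
  then have "norm (2*pi*\<i> * (reflection_integral F a1 b1 s w - reflection_integral F a1 b1 t w))
      \<le> 4 * (M/(a1/2) * (t - s))"
    unfolding reflection_integral_diff[OF st \<open>\<bar>Re w\<bar> < a1\<close>] using st a1 b1
    by (intro sum4 bound_F bound_g) auto
  also have "\<dots> = 8*M/a1 * (t - s)" using a1 by (simp add: field_simps)
  finally have "2*pi * norm (reflection_integral F a1 b1 s w - reflection_integral F a1 b1 t w)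
      \<le> 8*M/a1 * (t - s)"
    by (simp add: norm_mult)
  moreover have "norm (reflection_integral F a1 b1 s w - reflection_integral F a1 b1 t w)
      \<le> 2*pi * norm (reflection_integral F a1 b1 s w - reflection_integral F a1 b1 t w)"
    using pi_ge_two by (simp add: mult_le_cancel_right1)
  ultimately show ?thesis by linarith
qed

lemma uniformly_Cauchy_on_reflection_integral:
  assumes bnd: "\<And>u. u \<in> box (Complex (-a) 0) (Complex a b) \<Longrightarrow> norm (F u) \<le> M"
    and t: "\<And>n. 0 < t n" "\<And>n. t n \<le> b1" and "Cauchy t"
  shows "uniformly_Cauchy_on (cball 0 (a1/2)) (\<lambda>n. reflection_integral F a1 b1 (t n))"
proof (rule uniformly_Cauchy_onI)
  fix e :: real assume "0 < e"
  have "Complex 0 b1 \<in> box (Complex (-a) 0) (Complex a b)" using a1 b1 by (simp add: in_box_complex_iff)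
  then have "0 \<le> M" using bnd norm_ge_zero order_trans by blast
  define K where "K = 8*M/a1"
  have K: "0 \<le> K" using \<open>0 \<le> M\<close> a1 by (simp add: K_def)
  obtain N where N: "\<And>m n. N \<le> m \<Longrightarrow> N \<le> n \<Longrightarrow> norm (t m - t n) < e / (K + 1)"
    using CauchyD[OF \<open>Cauchy t\<close>, of "e / (K + 1)"] \<open>0 < e\<close> K by auto
  have lip: "norm (reflection_integral F a1 b1 (t m) w - reflection_integral F a1 b1 (t n) w)
      \<le> K * (t n - t m)"
    if "t m \<le> t n" "norm w \<le> a1/2" for m n w
    unfolding K_def using that t by (intro norm_reflection_integral_diff_le[OF bnd]) auto
  show "\<exists>N. \<forall>w\<in>cball 0 (a1/2). \<forall>m\<ge>N. \<forall>n\<ge>N.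
          dist (reflection_integral F a1 b1 (t m) w) (reflection_integral F a1 b1 (t n) w) < e"
  proof (intro exI[of _ N] ballI allI impI)
    fix w :: complex and m n assume "w \<in> cball 0 (a1/2)" "N \<le> m" "N \<le> n"
    then have "dist (reflection_integral F a1 b1 (t m) w) (reflection_integral F a1 b1 (t n) w)
        \<le> K * \<bar>t m - t n\<bar>"
      using lip[of m n w] lip[of n m w] by (cases "t m \<le> t n") (auto simp: dist_norm norm_minus_commute)
    also have "\<dots> \<le> K * (e / (K + 1))"
      using N[OF \<open>N \<le> m\<close> \<open>N \<le> n\<close>] K by (intro mult_left_mono) auto
    also have "\<dots> < e" using K \<open>0 < e\<close> by (simp add: field_simps)
    finally show "dist (reflection_integral F a1 b1 (t m) w) (reflection_integral F a1 b1 (t n) w) < e" .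
  qed
qed

lemma reflection_integral_tendsto:
  assumes bnd: "\<And>u. u \<in> box (Complex (-a) 0) (Complex a b) \<Longrightarrow> norm (F u) \<le> M"
    and Im_F: "\<And>\<epsilon>. \<epsilon> > 0 \<Longrightarrow> \<exists>\<tau>>0. \<forall>u\<in>box (Complex (-a) 0) (Complex a b). Im u < \<tau> \<longrightarrow> \<bar>Im (F u)\<bar> \<le> \<epsilon>"
    and w: "0 < Im w" "Im w < b1" "\<bar>Re w\<bar> < a1"
  shows "((\<lambda>t. reflection_integral F a1 b1 t w) \<longlongrightarrow> F w) (at_right 0)"
proof (rule tendstoI)
  fix e :: real assume e: "0 < e"
  define d where "d = Im w"
  have d: "0 < d" "d < b1" using w by (auto simp: d_def)
  have "w \<in> box (Complex (-a) 0) (Complex a b)" using w a1 b1 by (auto simp: in_box_complex_iff)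
  then have M: "0 \<le> M" using bnd norm_ge_zero order_trans by blast
  define \<epsilon> where "\<epsilon> = e*d/(32*a1)"
  obtain \<tau> where \<tau>: "\<tau> > 0" "\<And>u. u \<in> box (Complex (-a) 0) (Complex a b) \<Longrightarrow> Im u < \<tau> \<Longrightarrow> \<bar>Im (F u)\<bar> \<le> \<epsilon>"
    using Im_F[of \<epsilon>] e d a1 by (auto simp: \<epsilon>_def)
  define \<delta> where "\<delta> = min \<tau> (min (d/2) (e*d^2/(32*a1*(M+1))))"
  have "0 < \<delta>" using \<tau> d e a1 M by (simp add: \<delta>_def)
  then have "eventually (\<lambda>t. 0 < t \<and> t < \<delta>) (at_right 0)"
    by (auto simp: eventually_at_right_field)
  then show "eventually (\<lambda>t. dist (reflection_integral F a1 b1 t w) (F w) < e) (at_right 0)"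
  proof eventually_elim
    case (elim t)
    then have t: "0 < t" "t < \<tau>" "2*t \<le> d" "t \<le> e*d^2/(32*a1*(M+1))"
      by (auto simp: \<delta>_def)
    have seg: "closed_segment (Complex (-a1) t) (Complex a1 t) \<subseteq> box (Complex (-a) 0) (Complex a b)"
      using t d a1 b1 by (auto simp: closed_segment_same_Im in_box_complex_iff closed_segment_eq_real_ivl)
    have "2*pi*\<i> * (F w - reflection_integral F a1 b1 t w)
        = cauchy_segment (Complex (-a1) t) (Complex a1 t) F w
          + cauchy_segment (Complex a1 (-t)) (Complex (-a1) (-t)) (\<lambda>u. cnj (F (cnj u))) w"
      by (rule reflection_integral_cauchy) (use t w d in \<open>auto simp: d_def\<close>)
    also have "norm \<dots> \<le> (8*M*t/d^2 + 4*\<epsilon>/d) * (2*a1)"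
      unfolding d_def
    proof (rule norm_cauchy_segment_reflected_pair_le)
      show "continuous_on (closed_segment (Complex (- a1) t) (Complex a1 t)) F"
        using holomorphic_on_imp_continuous_on[OF holF] seg by (rule continuous_on_subset)
      show "norm (F u) \<le> M \<and> \<bar>Im (F u)\<bar> \<le> \<epsilon>" if "u \<in> closed_segment (Complex (- a1) t) (Complex a1 t)" for u
        using that seg bnd \<tau>(2) t by (auto simp: closed_segment_same_Im)
    qed (use t a1 d w in \<open>auto simp: d_def\<close>)
    also have "\<dots> = 16*a1*M*t/d^2 + e/4"
      using a1 d by (simp add: \<epsilon>_def field_simps power2_eq_square)
    also have "\<dots> < e"
    proof -
      have "16*a1*M*t/d^2 \<le> 16*a1*M*(e*d^2/(32*a1*(M+1)))/d^2"
        using t a1 M d by (intro divide_right_mono mult_left_mono) auto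
      also have "\<dots> = e/2 * (M/(M+1))"
        using a1 d M by (simp add: field_simps power2_eq_square add_pos_nonneg[THEN less_imp_neq, symmetric])
      also have "\<dots> \<le> e/2" using e M by (simp add: field_simps)
      finally show ?thesis using e by linarith
    qed
    finally have "2*pi * norm (F w - reflection_integral F a1 b1 t w) < e"
      by (simp add: norm_mult)
    moreover have "norm (F w - reflection_integral F a1 b1 t w)
        \<le> 2*pi * norm (F w - reflection_integral F a1 b1 t w)"
      using pi_ge_two by (simp add: mult_le_cancel_right1)
    ultimately show ?case by (simp add: dist_norm norm_minus_commute)
  qed
qed

end

lemma Schwarz_reflection_bounded:
  fixes F :: "complex \<Rightarrow> complex" and a b M :: real
  assumes a: "0 < a" and b: "0 < b"
    and holF: "F holomorphic_on box (Complex (-a) 0) (Complex a b)"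
    and bnd: "\<And>w. w \<in> box (Complex (-a) 0) (Complex a b) \<Longrightarrow> norm (F w) \<le> M"
    and Im_F: "\<And>\<epsilon>. \<epsilon> > 0 \<Longrightarrow> \<exists>\<tau>>0. \<forall>w\<in>box (Complex (-a) 0) (Complex a b). Im w < \<tau> \<longrightarrow> \<bar>Im (F w)\<bar> \<le> \<epsilon>"
  obtains r G where "0 < r" "G holomorphic_on ball 0 r" "\<And>w. w \<in> ball 0 r \<Longrightarrow> 0 < Im w \<Longrightarrow> G w = F w"
proof -
  define b1 where "b1 = b/2"
  define a1 where "a1 = min (a/2) b1"
  have a1: "0 < a1" "a1 < a" and b1: "0 < b1" "b1 < b" using a b by (auto simp: a1_def b1_def)
  define t where "t = (\<lambda>n::nat. b1 / real (n + 2))"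
  define H where "H = (\<lambda>n. reflection_integral F a1 b1 (t n))"
  have t: "0 < t n" "t n \<le> b1" for n using b1 by (auto simp: t_def divide_simps)
  have t_0: "t \<longlonglongrightarrow> 0"
    unfolding t_def using LIMSEQ_ignore_initial_segment[OF lim_const_over_n[of b1], of 2] by simp
  obtain G where G: "uniform_limit (cball 0 (a1/2)) H G sequentially"
    using uniformly_Cauchy_on_reflection_integral[OF holF a1 b1 bnd t LIMSEQ_imp_Cauchy[OF t_0]]
      Cauchy_uniformly_convergent unfolding uniformly_convergent_on_def H_def by blast
  have "H n holomorphic_on ball 0 (min a1 b1)" for n
    unfolding H_def by (rule holomorphic_reflection_integral[OF holF a1 b1 t])
  moreover have "cball 0 (a1/2) \<subseteq> ball 0 (min a1 b1)" using a1 by (auto simp: a1_def)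
  ultimately have "continuous_on (cball 0 (a1/2)) (H n) \<and> H n holomorphic_on ball 0 (a1/2)" for n
    by (meson ball_subset_cball holomorphic_on_imp_continuous_on holomorphic_on_subset subset_trans)
  then obtain holG: "G holomorphic_on ball 0 (a1/2)"
    using holomorphic_uniform_limit[OF always_eventually G trivial_limit_sequentially] by blast
  show ?thesis
  proof (rule that[OF _ holG])
    fix w assume w: "w \<in> ball 0 (a1/2)" "0 < Im w"
    have "(\<lambda>n. H n w) \<longlonglongrightarrow> G w"
      using tendsto_uniform_limitI[OF G, of w] w by auto
    moreover have "filterlim t (at_right 0) sequentially"
      using t by (intro tendsto_imp_filterlim_at_right[OF t_0]) auto
    then have "(\<lambda>n. H n w) \<longlonglongrightarrow> F w"
      unfolding H_def using w a1 b1 abs_Re_le_cmod[of w] abs_Im_le_cmod[of w]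
      by (intro filterlim_compose[OF reflection_integral_tendsto[OF holF a1 b1 bnd Im_F]]) (auto simp: a1_def)
    ultimately show "G w = F w" by (rule LIMSEQ_unique)
  qed (use a1 in simp)
qed

section \<open>Holomorphic maps preserving the upper half plane\<close>

lemma Im_cis_mult_nonneg_at_0:
  fixes g :: "complex \<Rightarrow> complex"
  assumes g: "isCont g 0" and s: "0 < s"
    and up: "\<And>w. w \<in> ball 0 s \<Longrightarrow> 0 < Im w \<Longrightarrow> 0 < Im (w^n * g w)"
    and \<theta>: "0 < \<theta>" "\<theta> < pi"
  shows "0 \<le> Im (cis (n * \<theta>) * g 0)"
proof -
  define h where "h = (\<lambda>x::real. Im (cis (n * \<theta>) * g (of_real x * cis \<theta>)))"
  have "((\<lambda>x::real. of_real x * cis \<theta>) \<longlongrightarrow> 0) (at_right 0)"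
    by (rule tendsto_eq_intros | simp)+
  from isCont_tendsto_compose[OF g this] have lim: "(h \<longlongrightarrow> Im (cis (n * \<theta>) * g 0)) (at_right 0)"
    unfolding h_def by (intro tendsto_intros)
  have "eventually (\<lambda>x. 0 < x \<and> x < s) (at_right 0)"
    using s by (auto simp: eventually_at_right_field)
  then have "eventually (\<lambda>x. 0 \<le> h x) (at_right 0)"
  proof eventually_elim
    case (elim x)
    define w where "w = of_real x * cis \<theta>"
    have "w \<in> ball 0 s" "0 < Im w"
      using elim \<theta> sin_gt_zero[of \<theta>] by (auto simp: w_def norm_mult)
    then have "0 < Im (w^n * g w)" by (rule up)
    moreover have "w^n * g w = of_real (x^n) * (cis (n * \<theta>) * g w)"
      by (simp add: w_def power_mult_distrib Complex.DeMoivre)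
    ultimately have "0 < Im (of_real (x^n) * (cis (n * \<theta>) * g w))" by (simp only:)
    then have "0 < x^n * h x" by (simp add: h_def w_def)
    then show ?case using elim by (simp add: zero_less_mult_iff)
  qed
  then show ?thesis by (rule tendsto_lowerbound[OF lim]) simp
qed

lemma Im_eq_0_at_0_if_real_on_right:
  fixes g :: "complex \<Rightarrow> complex"
  assumes g: "isCont g 0" and "0 < s" and real: "\<And>x. 0 < x \<Longrightarrow> x < s \<Longrightarrow> Im (g (of_real x)) = 0"
  shows "Im (g 0) = 0"
proof -
  have "((\<lambda>x::real. of_real x :: complex) \<longlongrightarrow> 0) (at_right 0)"
    by (rule tendsto_eq_intros | simp)+
  from isCont_tendsto_compose[OF g this]
  have lim: "((\<lambda>x::real. Im (g (of_real x))) \<longlongrightarrow> Im (g 0)) (at_right 0)"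
    by (intro tendsto_intros)
  have "eventually (\<lambda>x. 0 < x \<and> x < s) (at_right 0)"
    using \<open>0 < s\<close> by (auto simp: eventually_at_right_field)
  then have "eventually (\<lambda>x::real. Im (g (of_real x)) = 0) (at_right 0)"
    by eventually_elim (use real in auto)
  then show ?thesis using tendsto_unique[OF _ lim tendsto_eventually] by simp
qed

text \<open>For \<open>n \<ge> 2\<close> the angles \<open>\<pi>/(2n)\<close> and \<open>3\<pi>/(2n)\<close> would force opposite signs on \<open>\<alpha>\<close>.\<close>
lemma eq_1_if_sign_of_sin_mult_constant:
  assumes "0 < n" "\<alpha> \<noteq> 0" and sgn: "\<And>\<theta>. 0 < \<theta> \<Longrightarrow> \<theta> < pi \<Longrightarrow> 0 \<le> \<alpha> * sin (real n * \<theta>)"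
  shows "n = 1"
proof (rule ccontr)
  assume "n \<noteq> 1"
  with \<open>0 < n\<close> have n2: "2 \<le> n" by simp
  have "0 \<le> \<alpha>" using sgn[of "pi/(2*n)"] n2 pi_gt_zero by (simp add: field_simps)
  moreover have "0 \<le> - \<alpha>"
  proof -
    have e: "real n * (3*pi/(2*real n)) = pi/2 + pi" using n2 by (simp add: field_simps)
    have "0 \<le> \<alpha> * sin (pi/2 + pi)"
      using sgn[of "3*pi/(2*real n)"] n2 pi_gt_zero unfolding e by (simp add: field_simps)
    then show ?thesis by (simp only: sin_periodic_pi sin_pi_half)
  qed
  ultimately show False using \<open>\<alpha> \<noteq> 0\<close> by simp
qed

lemma deriv_real_pos_if_preserves_upper_half_plane:
  fixes \<Phi> :: "complex \<Rightarrow> complex"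
  assumes hol: "\<Phi> holomorphic_on ball 0 r" and "0 < r" and "\<Phi> 0 = 0"
    and real: "\<And>x. x \<in> ball 0 r \<Longrightarrow> Im x = 0 \<Longrightarrow> Im (\<Phi> x) = 0"
    and up: "\<And>w. w \<in> ball 0 r \<Longrightarrow> 0 < Im w \<Longrightarrow> 0 < Im (\<Phi> w)"
  shows "deriv \<Phi> 0 \<in> \<real>" "0 < Re (deriv \<Phi> 0)"
proof -
  have "\<not> \<Phi> constant_on ball 0 r"
  proof
    assume "\<Phi> constant_on ball 0 r"
    then have "\<Phi> (\<i> * of_real (r/2)) = \<Phi> 0"
      using \<open>0 < r\<close> by (auto simp: constant_on_def norm_mult)
    moreover have "0 < Im (\<Phi> (\<i> * of_real (r/2)))" using \<open>0 < r\<close> by (intro up) (auto simp: norm_mult)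
    ultimately show False using \<open>\<Phi> 0 = 0\<close> by simp
  qed
  then obtain g s n where n: "0 < n" and s: "0 < s" "ball (0::complex) s \<subseteq> ball 0 r"
      and holg: "g holomorphic_on ball 0 s" and fac: "\<And>w. w \<in> ball 0 s \<Longrightarrow> \<Phi> w = w^n * g w"
      and g_ne: "\<And>w. w \<in> ball 0 s \<Longrightarrow> g w \<noteq> 0"
    using holomorphic_factor_zero_nonconstant[OF hol open_ball connected_ball _ \<open>\<Phi> 0 = 0\<close>] \<open>0 < r\<close>
    by (metis centre_in_ball diff_zero)
  have g_cont: "isCont g 0"
    using holomorphic_on_imp_continuous_on[OF holg] s by (simp add: continuous_on_eq_continuous_at)
  have up_g: "0 < Im (w^n * g w)" if "w \<in> ball 0 s" "0 < Im w" for w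
    using up[of w] fac[of w] that s by auto
  define \<alpha> where "\<alpha> = Re (g 0)"
  have "Im (g (of_real x)) = 0" if "0 < x" "x < s" for x
  proof -
    have x: "of_real x \<in> ball (0::complex) s" using that by simp
    then have "of_real x \<in> ball (0::complex) r" using s(2) by blast
    then have "Im (\<Phi> (of_real x)) = 0" using real by simp
    moreover have "\<Phi> (of_real x) = of_real (x^n) * g (of_real x)" using fac[OF x] by simp
    ultimately show ?thesis using that by simp
  qed
  then have "Im (g 0) = 0" by (rule Im_eq_0_at_0_if_real_on_right[OF g_cont s(1)])
  then have g0: "g 0 = of_real \<alpha>" by (simp add: \<alpha>_def complex_eq_iff)
  have "\<alpha> \<noteq> 0" using g_ne[of 0] s g0 by auto
  have sgn: "0 \<le> \<alpha> * sin (n * \<theta>)" if "0 < \<theta>" "\<theta> < pi" for \<theta> :: real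
    using Im_cis_mult_nonneg_at_0[OF g_cont s(1) up_g that] by (simp add: g0 mult.commute)
  then have "n = 1" using eq_1_if_sign_of_sin_mult_constant[OF n \<open>\<alpha> \<noteq> 0\<close>] by blast
  then have "0 < \<alpha>" using sgn[of "pi/2"] \<open>\<alpha> \<noteq> 0\<close> by (simp add: less_le)
  have "((\<lambda>w. w * g w) has_field_derivative g 0) (at 0)"
    using DERIV_mult[OF DERIV_ident holomorphic_derivI[OF holg open_ball, of 0]] s by simp
  then have "(\<Phi> has_field_derivative g 0) (at 0)"
    by (rule has_field_derivative_transform_within_open[of _ _ _ "ball 0 s"]) (use s fac \<open>n = 1\<close> in auto)
  then have "deriv \<Phi> 0 = of_real \<alpha>" using g0 by (simp add: DERIV_imp_deriv)
  then show "deriv \<Phi> 0 \<in> \<real>" "0 < Re (deriv \<Phi> 0)" using \<open>0 < \<alpha>\<close> by auto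
qed

lemma Im_holomorphic_real_on_axis_approx:
  fixes \<Phi> :: "complex \<Rightarrow> complex"
  assumes hol: "\<Phi> holomorphic_on ball 0 r" and "0 < r"
    and real: "\<And>x. x \<in> ball 0 r \<Longrightarrow> Im x = 0 \<Longrightarrow> Im (\<Phi> x) = 0"
    and "deriv \<Phi> 0 \<in> \<real>" and "0 < \<delta>"
  obtains \<eta> where "0 < \<eta>" "\<eta> \<le> r"
    "\<And>w. w \<in> ball 0 \<eta> \<Longrightarrow> \<bar>Im (\<Phi> w) - Re (deriv \<Phi> 0) * Im w\<bar> \<le> \<delta> * \<bar>Im w\<bar>"
proof -
  define c where "c = deriv \<Phi> 0"
  have c: "c = of_real (Re c)" using \<open>deriv \<Phi> 0 \<in> \<real>\<close> by (simp add: c_def complex_is_Real_iff complex_eq_iff)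
  have "continuous_on (ball 0 r) (deriv \<Phi>)"
    by (intro holomorphic_on_imp_continuous_on holomorphic_deriv hol open_ball)
  then have "isCont (deriv \<Phi>) 0" using \<open>0 < r\<close> by (simp add: continuous_on_eq_continuous_at)
  then obtain \<eta>0 where \<eta>0: "0 < \<eta>0" "\<And>u. dist u 0 < \<eta>0 \<Longrightarrow> dist (deriv \<Phi> u) c < \<delta>"
    using \<open>0 < \<delta>\<close> unfolding continuous_at_eps_delta c_def by blast
  define \<eta> where "\<eta> = min \<eta>0 r"
  have \<eta>: "0 < \<eta>" "\<eta> \<le> r" using \<eta>0 \<open>0 < r\<close> by (auto simp: \<eta>_def)
  have mvt: "norm ((\<Phi> w - c * w) - (\<Phi> x - c * x)) \<le> \<delta> * norm (w - x)"
    if "w \<in> ball 0 \<eta>" "x \<in> ball 0 \<eta>" for w x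
  proof (rule field_differentiable_bound[OF convex_ball _ _ that])
    show "((\<lambda>u. \<Phi> u - c * u) has_field_derivative (deriv \<Phi> u - c)) (at u within ball 0 \<eta>)"
      if "u \<in> ball 0 \<eta>" for u
      using holomorphic_derivI[OF hol open_ball, of u] that \<eta>
      by (auto intro!: derivative_eq_intros intro: has_field_derivative_at_within)
    show "norm (deriv \<Phi> u - c) \<le> \<delta>" if "u \<in> ball 0 \<eta>" for u
      using \<eta>0(2)[of u] that by (simp add: \<eta>_def dist_norm)
  qed
  show ?thesis
  proof (rule that[OF \<eta>])
    fix w :: complex assume w: "w \<in> ball 0 \<eta>"
    define x where "x = complex_of_real (Re w)"
    have x: "x \<in> ball 0 \<eta>" using w abs_Re_le_cmod[of w] by (simp add: x_def)
    have "w - x = \<i> * of_real (Im w)" by (simp add: x_def complex_eq_iff)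
    then have "norm (w - x) = \<bar>Im w\<bar>" by (simp add: norm_mult)
    moreover have "Im ((\<Phi> w - c * w) - (\<Phi> x - c * x)) = Im (\<Phi> w) - Re (deriv \<Phi> 0) * Im w"
      using real[of x] x \<eta> by (subst (1 2) c) (auto simp: x_def c_def)
    ultimately show "\<bar>Im (\<Phi> w) - Re (deriv \<Phi> 0) * Im w\<bar> \<le> \<delta> * \<bar>Im w\<bar>"
      using mvt[OF w x] abs_Im_le_cmod by (metis order_trans)
  qed
qed

lemma Im_eq_0_on_real_axis_if_Im_tendsto_0:
  fixes \<Phi> :: "complex \<Rightarrow> complex"
  assumes cont: "continuous_on (ball 0 r) \<Phi>"
    and Im_small: "\<And>\<epsilon>. 0 < \<epsilon> \<Longrightarrow> \<exists>\<tau>>0. \<forall>w\<in>ball 0 r. 0 < Im w \<and> Im w < \<tau> \<longrightarrow> \<bar>Im (\<Phi> w)\<bar> \<le> \<epsilon>"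
    and x: "x \<in> ball 0 r" "Im x = 0"
  shows "Im (\<Phi> x) = 0"
proof -
  have "((\<lambda>s::real. x + \<i> * of_real s) \<longlongrightarrow> x) (at_right 0)"
    by (rule tendsto_eq_intros | simp)+
  moreover have "isCont \<Phi> x" using cont x by (simp add: continuous_on_eq_continuous_at)
  ultimately have lim: "((\<lambda>s. \<bar>Im (\<Phi> (x + \<i> * of_real s))\<bar>) \<longlongrightarrow> \<bar>Im (\<Phi> x)\<bar>) (at_right 0)"
    by (intro tendsto_intros isCont_tendsto_compose[of x \<Phi>])
  have "\<bar>Im (\<Phi> x)\<bar> \<le> \<epsilon>" if \<epsilon>: "0 < \<epsilon>" for \<epsilon>
  proof (rule tendsto_upperbound[OF lim])
    obtain \<tau> where \<tau>: "0 < \<tau>" "\<forall>w\<in>ball 0 r. 0 < Im w \<and> Im w < \<tau> \<longrightarrow> \<bar>Im (\<Phi> w)\<bar> \<le> \<epsilon>"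
      using Im_small[OF \<epsilon>] by blast
    have "0 < min \<tau> (r - norm x)" using \<tau> x by auto
    then have "eventually (\<lambda>s. 0 < s \<and> s < min \<tau> (r - norm x)) (at_right 0)"
      unfolding eventually_at_right_field by blast
    then show "eventually (\<lambda>s. \<bar>Im (\<Phi> (x + \<i> * of_real s))\<bar> \<le> \<epsilon>) (at_right 0)"
    proof eventually_elim
      case (elim s)
      have "norm (x + \<i> * of_real s) \<le> norm x + s"
        using norm_triangle_ineq[of x "\<i> * of_real s"] elim by (simp add: norm_mult)
      then show ?case using \<tau>(2) elim x by auto
    qed
  qed simp
  then show ?thesis by (metis abs_le_zero_iff dense_ge)
qed

lemma Ln_small_near_1:
  assumes "0 < \<rho>"
  obtains \<epsilon> where "0 < \<epsilon>" "\<And>z. z \<in> ball 1 \<epsilon> \<Longrightarrow> 0 < Re z \<and> norm (Ln z) < \<rho>"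
proof -
  have "isCont Ln (1::complex)" by (rule continuous_at_Ln) auto
  then obtain d where d: "0 < d" "\<And>z. dist z 1 < d \<Longrightarrow> dist (Ln z) (Ln 1) < \<rho>"
    using assms unfolding continuous_at_eps_delta by blast
  show ?thesis
  proof (rule that[of "min d (1/2)"])
    fix z :: complex assume z: "z \<in> ball 1 (min d (1/2))"
    then have "\<bar>Re z - 1\<bar> < 1/2" using abs_Re_le_cmod[of "z - 1"] by (simp add: dist_norm norm_minus_commute)
    then have "0 < Re z" by linarith
    then show "0 < Re z \<and> norm (Ln z) < \<rho>" using d(2)[of z] z by (simp add: dist_commute)
  qed (use d in simp)
qed

lemma norm_Ln_le_near_1:
  assumes "dist z 1 < 1/2"
  shows "norm (Ln z) \<le> 1 + pi"
proof -
  have n: "1/2 < norm z" "norm z < 3/2"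
    using norm_triangle_ineq3[of z 1] assms by (auto simp: dist_norm)
  then have "z \<noteq> 0" by auto
  have "ln (norm z) \<le> norm z - 1" using n by (intro ln_le_minus_one) auto
  moreover have "- ln (norm z) \<le> 1 / norm z - 1"
    using ln_le_minus_one[of "1 / norm z"] n \<open>z \<noteq> 0\<close> by (simp add: ln_div)
  moreover have "1 / norm z < 2" using n by (simp add: divide_less_eq)
  ultimately have "\<bar>Re (Ln z)\<bar> \<le> 1"
    using n \<open>z \<noteq> 0\<close> by (simp add: abs_le_iff)
  moreover have "\<bar>Im (Ln z)\<bar> \<le> pi"
    using mpi_less_Im_Ln[OF \<open>z \<noteq> 0\<close>] Im_Ln_le_pi[OF \<open>z \<noteq> 0\<close>] by linarith
  ultimately show ?thesis using cmod_le[of "Ln z"] by linarith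
qed

lemma deriv_exp_comp_Ln_at_1:
  fixes \<Phi> :: "complex \<Rightarrow> complex"
  assumes hol: "\<Phi> holomorphic_on ball 0 r" and "0 < r" and "\<Phi> 0 = 0"
  shows "deriv (\<lambda>z. exp (\<i> * \<Phi> (- \<i> * Ln z))) 1 = deriv \<Phi> 0"
proof -
  have "(\<Phi> has_field_derivative deriv \<Phi> 0) (at (- \<i> * Ln 1))"
    using holomorphic_derivI[OF hol open_ball, of 0] \<open>0 < r\<close> by simp
  moreover have "((\<lambda>z. - \<i> * Ln z) has_field_derivative - \<i>) (at (1::complex))"
    using DERIV_cmult[OF has_field_derivative_Ln[of 1], of "- \<i>"] by simp
  ultimately have "((\<lambda>z. \<Phi> (- \<i> * Ln z)) has_field_derivative deriv \<Phi> 0 * - \<i>) (at 1)"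
    by (rule DERIV_chain2)
  then have "((\<lambda>z. exp (\<i> * \<Phi> (- \<i> * Ln z))) has_field_derivative
               exp (\<i> * \<Phi> (- \<i> * Ln 1)) * (\<i> * (deriv \<Phi> 0 * - \<i>))) (at 1)"
    by (intro DERIV_chain2[OF DERIV_exp] DERIV_cmult)
  moreover have "\<i> * (deriv \<Phi> 0 * - \<i>) = deriv \<Phi> 0" by (simp add: algebra_simps)
  ultimately show ?thesis using \<open>\<Phi> 0 = 0\<close> by (intro DERIV_imp_deriv) simp
qed

lemma exp_conjugate_at_Ln:
  fixes A :: "complex set" and T \<Phi> :: "complex \<Rightarrow> complex"
  assumes A: "A \<subseteq> ball 0 1"
    and conj: "\<And>w. w \<in> ball 0 r \<Longrightarrow> 0 < Im w \<Longrightarrow> T (exp (\<i> * w)) = exp (\<i> * \<Phi> w)"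
    and z: "z \<in> A" "0 < Re z" "norm (Ln z) < r"
  shows "- \<i> * Ln z \<in> ball 0 r \<and> Im (- \<i> * Ln z) = - ln (norm z) \<and> 0 < - ln (norm z)
      \<and> T z = exp (\<i> * \<Phi> (- \<i> * Ln z))"
proof -
  have "z \<noteq> 0" "norm z < 1" using z A by auto
  then have "0 < - ln (norm z)" by simp
  moreover have "- \<i> * Ln z \<in> ball 0 r" using z by (simp add: norm_mult)
  ultimately show ?thesis
    using conj[of "- \<i> * Ln z"] \<open>z \<noteq> 0\<close> by simp
qed

lemma power_bounds_near_1_if_exp_conjugate:
  fixes A :: "complex set" and T \<Phi> :: "complex \<Rightarrow> complex"
  assumes A: "A \<subseteq> ball 0 1"
    and hol: "\<Phi> holomorphic_on ball 0 r" and "0 < r"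
    and real: "\<And>x. x \<in> ball 0 r \<Longrightarrow> Im x = 0 \<Longrightarrow> Im (\<Phi> x) = 0" and "deriv \<Phi> 0 \<in> \<real>"
    and conj: "\<And>w. w \<in> ball 0 r \<Longrightarrow> 0 < Im w \<Longrightarrow> T (exp (\<i> * w)) = exp (\<i> * \<Phi> w)"
    and "0 < \<delta>"
  shows "\<exists>\<epsilon>>0. \<forall>z\<in>A \<inter> ball 1 \<epsilon>. norm z powr (Re (deriv \<Phi> 0) + \<delta>) \<le> norm (T z) \<and>
           norm (T z) \<le> norm z powr (Re (deriv \<Phi> 0) - \<delta>)"
proof -
  obtain \<eta> where \<eta>: "0 < \<eta>" "\<eta> \<le> r"
    "\<And>w. w \<in> ball 0 \<eta> \<Longrightarrow> \<bar>Im (\<Phi> w) - Re (deriv \<Phi> 0) * Im w\<bar> \<le> \<delta> * \<bar>Im w\<bar>"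
    using Im_holomorphic_real_on_axis_approx[OF hol \<open>0 < r\<close> real \<open>deriv \<Phi> 0 \<in> \<real>\<close> \<open>0 < \<delta>\<close>] by blast
  obtain \<epsilon> where \<epsilon>: "0 < \<epsilon>" "\<And>z. z \<in> ball 1 \<epsilon> \<Longrightarrow> 0 < Re z \<and> norm (Ln z) < \<eta>"
    using Ln_small_near_1[OF \<open>0 < \<eta>\<close>] by blast
  show ?thesis
  proof (intro exI[of _ \<epsilon>] conjI ballI \<epsilon>(1))
    fix z assume z: "z \<in> A \<inter> ball 1 \<epsilon>"
    define y where "y = - ln (norm z)"
    have w: "- \<i> * Ln z \<in> ball 0 \<eta>" "Im (- \<i> * Ln z) = y" "0 < y" "T z = exp (\<i> * \<Phi> (- \<i> * Ln z))"
      using exp_conjugate_at_Ln[where T=T and \<Phi>=\<Phi> and r=r, OF A conj, of z] \<epsilon>(2)[of z] \<eta>(2) z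
      by (auto simp: y_def norm_mult)
    then have "\<bar>Im (\<Phi> (- \<i> * Ln z)) - Re (deriv \<Phi> 0) * y\<bar> \<le> \<delta> * y"
      using \<eta>(3) by fastforce
    moreover have "norm z powr p = exp (- p * y)" for p
      using \<epsilon>(2)[of z] z by (auto simp: powr_def y_def)
    ultimately show "norm z powr (Re (deriv \<Phi> 0) + \<delta>) \<le> norm (T z)"
      "norm (T z) \<le> norm z powr (Re (deriv \<Phi> 0) - \<delta>)"
      using w by (auto simp: abs_le_iff algebra_simps norm_exp_eq_Re)
  qed
qed

lemma power_bounds_at_1_if_exp_conjugate:
  fixes A :: "complex set" and T \<Phi> :: "complex \<Rightarrow> complex"
  assumes A: "A \<subseteq> ball 0 1"
    and hol: "\<Phi> holomorphic_on ball 0 r" and "0 < r" and "\<Phi> 0 = 0"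
    and real: "\<And>x. x \<in> ball 0 r \<Longrightarrow> Im x = 0 \<Longrightarrow> Im (\<Phi> x) = 0"
    and up: "\<And>w. w \<in> ball 0 r \<Longrightarrow> 0 < Im w \<Longrightarrow> 0 < Im (\<Phi> w)"
    and conj: "\<And>w. w \<in> ball 0 r \<Longrightarrow> 0 < Im w \<Longrightarrow> T (exp (\<i> * w)) = exp (\<i> * \<Phi> w)"
  shows "\<exists>\<rho>>0. \<exists>S. S holomorphic_on ball 1 \<rho> \<and> (\<forall>z\<in>A \<inter> ball 1 \<rho>. S z = T z)
           \<and> deriv S 1 \<in> \<real> \<and> Re (deriv S 1) > 0
           \<and> (\<forall>\<delta>>0. \<exists>\<epsilon>>0. \<forall>z\<in>A \<inter> ball 1 \<epsilon>.
                 norm z powr (Re (deriv S 1) + \<delta>) \<le> norm (T z) \<and>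
                 norm (T z) \<le> norm z powr (Re (deriv S 1) - \<delta>))"
proof -
  define S where "S = (\<lambda>z. exp (\<i> * \<Phi> (- \<i> * Ln z)))"
  obtain \<rho> where \<rho>: "0 < \<rho>" "\<And>z. z \<in> ball 1 \<rho> \<Longrightarrow> 0 < Re z \<and> norm (Ln z) < r"
    using Ln_small_near_1[OF \<open>0 < r\<close>] by blast
  have "(\<lambda>z. - \<i> * Ln z) holomorphic_on ball 1 \<rho>"
    using \<rho>(2) by (intro holomorphic_intros) (fastforce simp: complex_nonpos_Reals_iff)
  then have "(\<Phi> \<circ> (\<lambda>z. - \<i> * Ln z)) holomorphic_on ball 1 \<rho>"
    by (rule holomorphic_on_compose_gen[OF _ hol]) (use \<rho>(2) in \<open>auto simp: norm_mult\<close>)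
  then have "S holomorphic_on ball 1 \<rho>"
    unfolding S_def o_def by (intro holomorphic_intros)
  moreover have "\<forall>z\<in>A \<inter> ball 1 \<rho>. S z = T z"
    using exp_conjugate_at_Ln[where T=T and \<Phi>=\<Phi> and r=r, OF A conj] \<rho>(2) by (simp add: S_def)
  moreover have "deriv S 1 = deriv \<Phi> 0"
    unfolding S_def by (rule deriv_exp_comp_Ln_at_1[OF hol \<open>0 < r\<close> \<open>\<Phi> 0 = 0\<close>])
  moreover have "deriv \<Phi> 0 \<in> \<real>" "0 < Re (deriv \<Phi> 0)"
    using deriv_real_pos_if_preserves_upper_half_plane[OF hol \<open>0 < r\<close> \<open>\<Phi> 0 = 0\<close> real up] by blast+
  ultimately show ?thesis
    using \<rho>(1) power_bounds_near_1_if_exp_conjugate[OF A hol \<open>0 < r\<close> real _ conj]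
    by (intro exI[of _ \<rho>] conjI exI[of _ S]) auto
qed

section \<open>Conformal maps fixing the boundary point 1\<close>

locale conformal_map_fixing_1 =
  fixes A B :: "complex set" and T :: "complex \<Rightarrow> complex" and R :: real
  assumes open_A: "open A" and A_disc: "A \<subseteq> ball 0 1" and B_disc: "B \<subseteq> ball 0 1"
    and R: "0 < R"
    and A_near_1: "A \<inter> ball 1 R = ball 0 1 \<inter> ball 1 R"
    and B_near_1: "B \<inter> ball 1 R = ball 0 1 \<inter> ball 1 R"
    and holT: "T holomorphic_on A" and bij: "bij_betw T A B"
    and T_tendsto: "(T \<longlongrightarrow> 1) (at 1 within A)"
begin

lemma T_close_to_1:
  assumes "0 < \<epsilon>"
  obtains \<eta> where "0 < \<eta>" "\<eta> \<le> R" "\<And>z. z \<in> A \<Longrightarrow> dist z 1 < \<eta> \<Longrightarrow> dist (T z) 1 < \<epsilon>"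
proof -
  have "eventually (\<lambda>z. dist (T z) 1 < \<epsilon>) (at 1 within A)"
    using T_tendsto assms by (simp add: tendsto_iff)
  then obtain d where "0 < d" "\<And>z. z \<in> A \<Longrightarrow> z \<noteq> 1 \<Longrightarrow> dist z 1 < d \<Longrightarrow> dist (T z) 1 < \<epsilon>"
    by (auto simp: eventually_at)
  moreover have "z \<noteq> 1" if "z \<in> A" for z using A_disc that by auto
  ultimately show ?thesis using R by (intro that[of "min d R"]) auto
qed

text \<open>The preimage of a compact subset of \<open>B\<close> is a compact subset of \<open>A\<close>, hence stays away from the
  unit circle.\<close>
lemma norm_T_near_circle:
  assumes "0 < \<kappa>" "\<epsilon> < R" and close: "\<And>z. z \<in> A \<Longrightarrow> dist z 1 < \<eta> \<Longrightarrow> dist (T z) 1 < \<epsilon>"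
  obtains \<theta> where "0 < \<theta>" "\<And>z. z \<in> A \<Longrightarrow> dist z 1 < \<eta> \<Longrightarrow> 1 - \<theta> < norm z \<Longrightarrow> 1 - \<kappa> < norm (T z)"
proof -
  define K where "K = cball (1::complex) \<epsilon> \<inter> cball 0 (1 - \<kappa>)"
  have "K \<subseteq> B"
    using assms B_near_1 by (force simp: K_def dist_commute)
  obtain T' where holT': "T' holomorphic_on T ` A" and T'T: "\<And>z. z \<in> A \<Longrightarrow> T' (T z) = z"
    using holomorphic_has_inverse[OF holT open_A] bij by (metis bij_betw_def)
  have TA: "T ` A = B" using bij by (simp add: bij_betw_def)
  have "compact (T' ` K)"
    using \<open>K \<subseteq> B\<close> TA holomorphic_on_imp_continuous_on[OF holT']
    by (intro compact_continuous_image) (auto simp: K_def intro: compact_Int_closed continuous_on_subset)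
  moreover have "T' ` K \<subseteq> A" using \<open>K \<subseteq> B\<close> TA T'T by auto
  ultimately obtain \<theta> where \<theta>: "0 < \<theta>" "\<And>y. y \<in> T' ` K \<Longrightarrow> norm y \<le> 1 - \<theta>"
  proof (cases "T' ` K = {}")
    case False
    then obtain m where m: "m \<in> norm ` T' ` K" "\<And>x. x \<in> norm ` T' ` K \<Longrightarrow> x \<le> m"
      using compact_attains_sup[of "norm ` T' ` K"] \<open>compact (T' ` K)\<close>
      by (metis compact_continuous_image continuous_on_norm_id image_is_empty)
    then have "m < 1" using \<open>T' ` K \<subseteq> A\<close> A_disc by fastforce
    then show ?thesis using m that[of "1 - m"] by auto
  qed (use that[of 1] in auto)
  show ?thesis
  proof (rule that[OF \<theta>(1)])
    fix z assume z: "z \<in> A" "dist z 1 < \<eta>" "1 - \<theta> < norm z"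
    show "1 - \<kappa> < norm (T z)"
    proof (rule ccontr)
      assume "\<not> 1 - \<kappa> < norm (T z)"
      then have "T z \<in> K" using close[OF z(1,2)] by (auto simp: K_def dist_commute)
      then have "norm z \<le> 1 - \<theta>" using \<theta>(2) T'T[OF z(1)] by (metis image_eqI)
      then show False using z(3) by simp
    qed
  qed
qed

lemma exp_half_box:
  obtains a where "0 < a"
    "\<And>w. w \<in> box (Complex (-a) 0) (Complex a a) \<Longrightarrow> exp (\<i> * w) \<in> A \<and> dist (T (exp (\<i> * w))) 1 < 1/2"
    "\<And>\<kappa>. 0 < \<kappa> \<Longrightarrow> \<exists>\<tau>>0. \<forall>w\<in>box (Complex (-a) 0) (Complex a a). Im w < \<tau> \<longrightarrow> 1 - \<kappa> < norm (T (exp (\<i> * w)))"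
proof -
  define \<epsilon> where "\<epsilon> = min (R/2) (1/2)"
  have \<epsilon>: "0 < \<epsilon>" "\<epsilon> < R" "\<epsilon> \<le> 1/2" using R by (auto simp: \<epsilon>_def)
  obtain \<eta> where \<eta>: "0 < \<eta>" "\<eta> \<le> R" "\<And>z. z \<in> A \<Longrightarrow> dist z 1 < \<eta> \<Longrightarrow> dist (T z) 1 < \<epsilon>"
    using T_close_to_1[OF \<epsilon>(1)] by blast
  have "isCont (\<lambda>w. exp (\<i> * w)) 0" by (intro continuous_intros)
  then obtain \<rho> where \<rho>: "0 < \<rho>" "\<And>w. dist w 0 < \<rho> \<Longrightarrow> dist (exp (\<i> * w)) 1 < \<eta>"
    using \<eta>(1) unfolding continuous_at_eps_delta by fastforce
  define a where "a = \<rho>/2"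
  have in_A: "exp (\<i> * w) \<in> A \<and> dist (exp (\<i> * w)) 1 < \<eta>" if "w \<in> box (Complex (-a) 0) (Complex a a)" for w
  proof -
    have "norm w \<le> \<bar>Re w\<bar> + \<bar>Im w\<bar>" by (rule cmod_le)
    also have "\<dots> < \<rho>" using that by (auto simp: a_def in_box_complex_iff)
    finally have "dist (exp (\<i> * w)) 1 < \<eta>" using \<rho>(2)[of w] by simp
    moreover have "norm (exp (\<i> * w)) < 1" using that by (simp add: norm_exp_eq_Re in_box_complex_iff)
    ultimately show ?thesis using A_near_1 \<eta>(2) by (auto simp: dist_commute)
  qed
  show ?thesis
  proof (rule that)
    show "0 < a" using \<rho> by (simp add: a_def)
    show "exp (\<i> * w) \<in> A \<and> dist (T (exp (\<i> * w))) 1 < 1/2" if "w \<in> box (Complex (-a) 0) (Complex a a)" for w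
      using in_A[OF that] \<eta>(3) \<epsilon>(3) by fastforce
    show "\<exists>\<tau>>0. \<forall>w\<in>box (Complex (-a) 0) (Complex a a). Im w < \<tau> \<longrightarrow> 1 - \<kappa> < norm (T (exp (\<i> * w)))"
      if \<kappa>: "0 < \<kappa>" for \<kappa>
    proof -
      obtain \<theta> where \<theta>: "0 < \<theta>" "\<And>z. z \<in> A \<Longrightarrow> dist z 1 < \<eta> \<Longrightarrow> 1 - \<theta> < norm z \<Longrightarrow> 1 - \<kappa> < norm (T z)"
        using norm_T_near_circle[OF \<kappa> \<epsilon>(2) \<eta>(3)] by blast
      define \<tau> where "\<tau> = - ln (1 - min \<theta> (1/2))"
      have e\<tau>: "exp (- \<tau>) = 1 - min \<theta> (1/2)" using \<theta> by (simp add: \<tau>_def)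
      have "1 - \<kappa> < norm (T (exp (\<i> * w)))" if "w \<in> box (Complex (-a) 0) (Complex a a)" "Im w < \<tau>" for w
      proof -
        have "exp (- \<tau>) < exp (- Im w)" using that by simp
        then have "1 - \<theta> < norm (exp (\<i> * w))" using e\<tau> by (simp add: norm_exp_eq_Re)
        then show ?thesis using \<theta>(2) in_A[OF that(1)] by blast
      qed
      moreover have "0 < \<tau>" using \<theta> by (simp add: \<tau>_def)
      ultimately show ?thesis by blast
    qed
  qed
qed

definition T_lift :: "complex \<Rightarrow> complex" where
  "T_lift w = - \<i> * Ln (T (exp (\<i> * w)))"

lemma T_lift_half_box:
  obtains a where "0 < a" "T_lift holomorphic_on box (Complex (-a) 0) (Complex a a)"
    "\<And>w. w \<in> box (Complex (-a) 0) (Complex a a) \<Longrightarrow>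
       norm (T_lift w) \<le> 1 + pi \<and> 0 < Im (T_lift w) \<and> exp (\<i> * T_lift w) = T (exp (\<i> * w))"
    "\<And>\<epsilon>. 0 < \<epsilon> \<Longrightarrow> \<exists>\<tau>>0. \<forall>w\<in>box (Complex (-a) 0) (Complex a a). Im w < \<tau> \<longrightarrow> \<bar>Im (T_lift w)\<bar> \<le> \<epsilon>"
proof -
  obtain a where a: "0 < a"
    "\<And>w. w \<in> box (Complex (-a) 0) (Complex a a) \<Longrightarrow> exp (\<i> * w) \<in> A \<and> dist (T (exp (\<i> * w))) 1 < 1/2"
    "\<And>\<kappa>. 0 < \<kappa> \<Longrightarrow> \<exists>\<tau>>0. \<forall>w\<in>box (Complex (-a) 0) (Complex a a). Im w < \<tau> \<longrightarrow> 1 - \<kappa> < norm (T (exp (\<i> * w)))"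
    using exp_half_box by blast
  define P where "P = box (Complex (-a) 0) (Complex a a)"
  have image: "T (exp (\<i> * w)) \<noteq> 0 \<and> 0 < Re (T (exp (\<i> * w))) \<and> norm (T (exp (\<i> * w))) < 1"
    if "w \<in> P" for w
  proof -
    have "T (exp (\<i> * w)) \<in> B" using a(2) that bij by (auto simp: P_def bij_betw_def)
    moreover have "\<bar>Re (T (exp (\<i> * w))) - 1\<bar> < 1/2"
      using a(2)[of w] that abs_Re_le_cmod[of "T (exp (\<i> * w)) - 1"] by (simp add: P_def dist_norm)
    then have "0 < Re (T (exp (\<i> * w)))" by linarith
    ultimately show ?thesis using B_disc by auto
  qed
  have Im_T_lift: "Im (T_lift w) = - ln (norm (T (exp (\<i> * w))))" if "w \<in> P" for w
    using image[OF that] by (simp add: T_lift_def)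
  show ?thesis
  proof (rule that[OF a(1)])
    have "(\<lambda>w. T (exp (\<i> * w))) holomorphic_on P"
      using holomorphic_on_compose_gen[of _ P _ A, OF _ holT] a(2) unfolding o_def P_def
      by (force intro: holomorphic_intros)
    then show "T_lift holomorphic_on box (Complex (-a) 0) (Complex a a)"
      unfolding T_lift_def P_def[symmetric] using image
      by (intro holomorphic_intros holomorphic_on_Ln') (fastforce simp: complex_nonpos_Reals_iff)
  next
    fix w assume w: "w \<in> box (Complex (-a) 0) (Complex a a)"
    then have "w \<in> P" by (simp add: P_def)
    note \<zeta> = image[OF this]
    have "norm (T_lift w) \<le> 1 + pi"
      using norm_Ln_le_near_1 a(2)[OF w] by (simp add: T_lift_def norm_mult)
    then show "norm (T_lift w) \<le> 1 + pi \<and> 0 < Im (T_lift w)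
        \<and> exp (\<i> * T_lift w) = T (exp (\<i> * w))"
      using \<zeta> Im_T_lift[OF \<open>w \<in> P\<close>] by (auto simp: T_lift_def)
  next
    fix \<epsilon> :: real assume "0 < \<epsilon>"
    then obtain \<tau> where \<tau>: "0 < \<tau>" "\<And>w. w \<in> P \<Longrightarrow> Im w < \<tau> \<Longrightarrow> exp (- \<epsilon>) < norm (T (exp (\<i> * w)))"
      using a(3)[of "1 - exp (- \<epsilon>)"] by (auto simp: P_def)
    have "\<bar>Im (T_lift w)\<bar> \<le> \<epsilon>" if "w \<in> P" "Im w < \<tau>" for w
      using \<tau>(2)[OF that] image[OF that(1)] Im_T_lift[OF that(1)]
      by (auto simp: ln_less_cancel_iff[symmetric] simp del: ln_less_cancel_iff)
    then show "\<exists>\<tau>>0. \<forall>w\<in>box (Complex (- a) 0) (Complex a a). Im w < \<tau> \<longrightarrow> \<bar>Im (T_lift w)\<bar> \<le> \<epsilon>"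
      using \<tau>(1) by (auto simp: P_def)
  qed
qed

lemma T_lift_tendsto_0: "((\<lambda>s::real. T_lift (\<i> * of_real s)) \<longlongrightarrow> 0) (at_right 0)"
proof -
  have lim: "((\<lambda>s::real. exp (\<i> * (\<i> * of_real s))) \<longlongrightarrow> 1) (at_right 0)"
    by (rule tendsto_eq_intros | simp)+
  have "eventually (\<lambda>s. dist (exp (\<i> * (\<i> * of_real s))) 1 < R) (at_right 0)"
    using lim R by (rule tendstoD)
  moreover have "eventually (\<lambda>s::real. 0 < s) (at_right 0)"
    by (simp add: eventually_at_filter)
  ultimately have "eventually (\<lambda>s. exp (\<i> * (\<i> * of_real s)) \<in> A - {1}) (at_right 0)"
  proof eventually_elim
    case (elim s)
    then have n: "norm (exp (\<i> * (\<i> * of_real s))) < 1" by (simp add: norm_exp_eq_Re)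
    then have "exp (\<i> * (\<i> * of_real s)) \<in> ball 0 1 \<inter> ball 1 R" using elim by (simp add: dist_commute)
    moreover have "exp (\<i> * (\<i> * of_real s)) \<noteq> 1" using n by (metis norm_one order_less_irrefl)
    ultimately show ?case using A_near_1 by blast
  qed
  with lim have "filterlim (\<lambda>s::real. exp (\<i> * (\<i> * of_real s))) (at 1 within A) (at_right 0)"
    by (rule filterlim_at_withinI)
  then have "((\<lambda>s. T_lift (\<i> * of_real s)) \<longlongrightarrow> - \<i> * Ln 1) (at_right 0)"
    unfolding T_lift_def by (intro tendsto_intros filterlim_compose[OF T_tendsto]) auto
  then show ?thesis by simp
qed

lemma T_lift_extends:
  obtains r \<Phi> where "0 < r" "\<Phi> holomorphic_on ball 0 r" "\<Phi> 0 = 0"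
    "\<And>x. x \<in> ball 0 r \<Longrightarrow> Im x = 0 \<Longrightarrow> Im (\<Phi> x) = 0"
    "\<And>w. w \<in> ball 0 r \<Longrightarrow> 0 < Im w \<Longrightarrow> 0 < Im (\<Phi> w)"
    "\<And>w. w \<in> ball 0 r \<Longrightarrow> 0 < Im w \<Longrightarrow> T (exp (\<i> * w)) = exp (\<i> * \<Phi> w)"
proof -
  obtain a where a: "0 < a" "T_lift holomorphic_on box (Complex (-a) 0) (Complex a a)"
    "\<And>w. w \<in> box (Complex (-a) 0) (Complex a a) \<Longrightarrow>
       norm (T_lift w) \<le> 1 + pi \<and> 0 < Im (T_lift w) \<and> exp (\<i> * T_lift w) = T (exp (\<i> * w))"
    "\<And>\<epsilon>. 0 < \<epsilon> \<Longrightarrow> \<exists>\<tau>>0. \<forall>w\<in>box (Complex (-a) 0) (Complex a a). Im w < \<tau> \<longrightarrow> \<bar>Im (T_lift w)\<bar> \<le> \<epsilon>"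
    using T_lift_half_box by blast
  obtain r0 \<Phi> where \<Phi>: "0 < r0" "\<Phi> holomorphic_on ball 0 r0"
    "\<And>w. w \<in> ball 0 r0 \<Longrightarrow> 0 < Im w \<Longrightarrow> \<Phi> w = T_lift w"
    using Schwarz_reflection_bounded[OF a(1) a(1) a(2) _ a(4)] a(3) by metis
  define r where "r = min r0 a"
  have r: "0 < r" using \<Phi>(1) a(1) by (simp add: r_def)
  have upper: "w \<in> box (Complex (-a) 0) (Complex a a) \<and> \<Phi> w = T_lift w" if "w \<in> ball 0 r" "0 < Im w" for w
    using that \<Phi>(3) abs_Re_le_cmod[of w] abs_Im_le_cmod[of w] by (auto simp: r_def in_box_complex_iff)
  have hol: "\<Phi> holomorphic_on ball 0 r" using \<Phi>(2) by (rule holomorphic_on_subset) (auto simp: r_def)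
  have real: "Im (\<Phi> x) = 0" if "x \<in> ball 0 r" "Im x = 0" for x
  proof (rule Im_eq_0_on_real_axis_if_Im_tendsto_0[OF holomorphic_on_imp_continuous_on[OF hol] _ that])
    fix \<epsilon> :: real assume "0 < \<epsilon>"
    then show "\<exists>\<tau>>0. \<forall>w\<in>ball 0 r. 0 < Im w \<and> Im w < \<tau> \<longrightarrow> \<bar>Im (\<Phi> w)\<bar> \<le> \<epsilon>"
      using a(4) upper by metis
  qed
  have "\<Phi> 0 = 0"
  proof -
    have "eventually (\<lambda>s. 0 < s \<and> s < r) (at_right (0::real))"
      using r by (auto simp: eventually_at_right_field)
    then have "eventually (\<lambda>s. T_lift (\<i> * of_real s) = \<Phi> (\<i> * of_real s)) (at_right 0)"
      by eventually_elim (use upper in \<open>auto simp: norm_mult\<close>)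
    with T_lift_tendsto_0 have "((\<lambda>s. \<Phi> (\<i> * of_real s)) \<longlongrightarrow> 0) (at_right 0)"
      by (rule Lim_transform_eventually)
    moreover have "((\<lambda>s::real. \<Phi> (\<i> * of_real s)) \<longlongrightarrow> \<Phi> 0) (at_right 0)"
    proof (rule isCont_tendsto_compose[of 0 \<Phi>])
      show "isCont \<Phi> 0"
        using holomorphic_on_imp_continuous_on[OF hol] r by (simp add: continuous_on_eq_continuous_at)
    qed (rule tendsto_eq_intros | simp)+
    ultimately show ?thesis using tendsto_unique[OF trivial_limit_at_right_real] by metis
  qed
  then show ?thesis
    using r hol real upper a(3) by (intro that[of r \<Phi>]) force+
qed

end

theorem lemma14:
  fixes A B :: "complex set" and T :: "complex \<Rightarrow> complex" and R :: real
  assumes "open A" "connected A" "A \<subseteq> ball 0 1"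
    and "open B" "connected B" "B \<subseteq> ball 0 1"
    and "R > 0"
    and "A \<inter> ball 1 R = ball 0 1 \<inter> ball 1 R"
    and "B \<inter> ball 1 R = ball 0 1 \<inter> ball 1 R"
    and "T holomorphic_on A" and "bij_betw T A B"
    and "(T \<longlongrightarrow> 1) (at 1 within A)"
  shows "\<exists>r>0. \<exists>S. S holomorphic_on ball 1 r \<and> (\<forall>z\<in>A \<inter> ball 1 r. S z = T z)
           \<and> deriv S 1 \<in> \<real> \<and> Re (deriv S 1) > 0
           \<and> (\<forall>\<delta>>0. \<exists>\<epsilon>>0. \<forall>z\<in>A \<inter> ball 1 \<epsilon>.
                 norm z powr (Re (deriv S 1) + \<delta>) \<le> norm (T z) \<and>
                 norm (T z) \<le> norm z powr (Re (deriv S 1) - \<delta>))"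
proof -
  interpret conformal_map_fixing_1 A B T R
    using assms by unfold_locales
  obtain r \<Phi> where "0 < r" "\<Phi> holomorphic_on ball 0 r" "\<Phi> 0 = 0"
    "\<And>x. x \<in> ball 0 r \<Longrightarrow> Im x = 0 \<Longrightarrow> Im (\<Phi> x) = 0"
    "\<And>w. w \<in> ball 0 r \<Longrightarrow> 0 < Im w \<Longrightarrow> 0 < Im (\<Phi> w)"
    "\<And>w. w \<in> ball 0 r \<Longrightarrow> 0 < Im w \<Longrightarrow> T (exp (\<i> * w)) = exp (\<i> * \<Phi> w)"
    using T_lift_extends by blast
  then show ?thesis
    using power_bounds_at_1_if_exp_conjugate[OF \<open>A \<subseteq> ball 0 1\<close>] by blast
qed

end
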